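(* Let $f(z)=\sum_{k\ge0}\hat f(k)z^k$ be holomorphic on the unit disk with $\sum_{k\ge0}|\hat f(k)|<\infty$ and $f(0)\ne0$, and let $(\gamma_n)_{n\ge0}$ be an increasing sequence in $(0,\infty)$. Let $A=(a_{nk})_{n,k\ge0}$ be the lower-triangular matrix with $a_{nk}:=\gamma_n^{-1}\widehat{(1/f)}(n-k)$ for $0\le k\le n$ and $a_{nk}=0$ for $k>n$, where $\widehat{(1/f)}(m)$ denotes the $m$-th Taylor coefficient of $1/f$ at $0$. Then $A$ has a left inverse $B=(b_{jn})_{j,n\ge0}$ (i.e. $\sum_n|b_{jn}|<\infty$ for each $j$ and $\sum_n b_{jn}a_{nk}=\delta_{jk}$ for all $j,k$) which is lower-triangular and satisfies \[ \sum_{n\ge0}|b_{jn}|\asymp\gamma_j\quad(j\to\infty). \]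
   Context: $\asymp$ means each side is bounded by a constant multiple of the other, with constants independent of $j$. *)

theory Defs
  imports "HOL-Complex_Analysis.Complex_Analysis"
begin

definition taylor_coeff0 :: "(complex \<Rightarrow> complex) \<Rightarrow> nat \<Rightarrow> complex" where
  "taylor_coeff0 g m = (deriv ^^ m) g 0 / of_nat (fact m)"

end

theory Submission
  imports Defs
begin

text \<open>Write \<open>T(a)\<close> for the lower-triangular Toeplitz matrix \<open>(a(j - k))\<^sub>j\<^sub>k\<close> of a
  sequence \<open>a\<close> and \<open>D = diag(\<gamma>)\<close>. Then \<open>A = D\<^sup>-\<^sup>1 T(c)\<close>, where \<open>c\<close> are the
  coefficients of \<open>1/f\<close>, and \<open>T(a) T(b) = T(a * b)\<close> for the Cauchy product, so
  \<open>B = T(fhat) D\<close>, i.e. \<open>b\<^sub>j\<^sub>n = fhat(j - n) \<gamma>(n)\<close>, is a left inverse of \<open>A\<close>. The \<open>j\<close>-th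
  absolute row sum of \<open>B\<close> contains the term \<open>|fhat(0)| \<gamma>(j)\<close> and, as \<open>\<gamma>\<close> increases, is at
  most \<open>(\<Sum>\<^sub>k |fhat(k)|) \<gamma>(j)\<close>.\<close>

definition lower_toeplitz :: "(nat \<Rightarrow> 'a::zero) \<Rightarrow> nat \<Rightarrow> nat \<Rightarrow> 'a" where
  "lower_toeplitz a j k = (if k \<le> j then a (j - k) else 0)"

lemma suminf_lower_toeplitz_row_mult:
  fixes a d :: "nat \<Rightarrow> 'a::{semiring_0, t2_space}"
  shows "(\<Sum>n. lower_toeplitz a j n * d n) = (\<Sum>n\<le>j. a (j - n) * d n)"
  by (subst suminf_finite[of "{..j}"]) (auto simp: lower_toeplitz_def)

lemma lower_toeplitz_mult:
  fixes F G :: "'a::{comm_semiring_1, t2_space} fps"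
  shows "(\<Sum>n. lower_toeplitz (fps_nth F) j n * lower_toeplitz (fps_nth G) n k)
           = lower_toeplitz (fps_nth (F * G)) j k"
proof -
  have "(\<Sum>n. lower_toeplitz (fps_nth F) j n * lower_toeplitz (fps_nth G) n k)
          = (\<Sum>n=k..j. F $ (j - n) * G $ (n - k))"
    by (subst suminf_finite[of "{k..j}"]) (auto simp: lower_toeplitz_def)
  also have "\<dots> = lower_toeplitz (fps_nth (F * G)) j k"
  proof (cases "k \<le> j")
    case True
    have "(\<Sum>n=k..j. F $ (j - n) * G $ (n - k)) = (\<Sum>i=0..j-k. F $ (j - (i + k)) * G $ i)"
      using True sum.shift_bounds_cl_nat_ivl[of "\<lambda>n. F $ (j - n) * G $ (n - k)" 0 k "j - k"]
      by simp
    also have "\<dots> = (\<Sum>i=0..j-k. G $ i * F $ (j - k - i))"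
      by (intro sum.cong) (auto simp: mult.commute add.commute)
    also have "\<dots> = (G * F) $ (j - k)"
      by (simp add: fps_mult_nth)
    finally show ?thesis
      using True by (simp add: lower_toeplitz_def mult.commute)
  qed (simp add: lower_toeplitz_def)
  finally show ?thesis .
qed

lemma convolution_ge_diagonal_term:
  fixes w g :: "nat \<Rightarrow> real"
  assumes "\<And>k. w k \<ge> 0" and "\<And>n. g n \<ge> 0"
  shows "w 0 * g j \<le> (\<Sum>n\<le>j. w (j - n) * g n)"
  using sum_mono2[of "{..j}" "{j}" "\<lambda>n. w (j - n) * g n"] assms by simp

lemma convolution_le_suminf_mult_mono:
  fixes w g :: "nat \<Rightarrow> real"
  assumes "summable w" and "\<And>k. w k \<ge> 0" and "mono g" and "g j \<ge> 0"
  shows "(\<Sum>n\<le>j. w (j - n) * g n) \<le> (\<Sum>k. w k) * g j"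
proof -
  have "(\<Sum>n\<le>j. w (j - n) * g n) \<le> (\<Sum>n\<le>j. w (j - n)) * g j"
    unfolding sum_distrib_right
    by (intro sum_mono mult_left_mono monoD[OF \<open>mono g\<close>]) (auto simp: assms)
  also have "(\<Sum>n\<le>j. w (j - n)) = (\<Sum>n\<le>j. w n)"
    using sum.atLeastAtMost_rev[of w 0 j] by (simp add: atLeast0AtMost)
  also have "\<dots> \<le> (\<Sum>k. w k)"
    using assms by (intro sum_le_suminf) auto
  finally show ?thesis
    using \<open>g j \<ge> 0\<close> by (simp add: mult_right_mono)
qed

lemma lower_toeplitz_scaled_left_inverse:
  fixes F :: "'a::{field, t2_space} fps"
  assumes "F $ 0 \<noteq> 0" and "\<And>n. d n \<noteq> 0"
  shows "(\<Sum>n. (lower_toeplitz (fps_nth F) j n * d n) * (lower_toeplitz (fps_nth (inverse F)) n k / d n))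
           = (if j = k then 1 else 0)"
proof -
  have "(\<Sum>n. (lower_toeplitz (fps_nth F) j n * d n) * (lower_toeplitz (fps_nth (inverse F)) n k / d n))
          = lower_toeplitz (fps_nth (F * inverse F)) j k"
    using assms(2) by (simp add: lower_toeplitz_mult)
  also have "F * inverse F = 1"
    using assms(1) by (simp add: inverse_mult_eq_1')
  finally show ?thesis
    by (simp add: lower_toeplitz_def)
qed

lemma
  fixes a :: "nat \<Rightarrow> 'a::real_normed_div_algebra" and \<gamma> :: "nat \<Rightarrow> real"
  assumes "summable (\<lambda>k. norm (a k))" and "mono \<gamma>" and "\<And>n. \<gamma> n > 0"
  shows lower_toeplitz_scaled_row_norm_ge: "norm (a 0) * \<gamma> j \<le> (\<Sum>n. norm (lower_toeplitz a j n * of_real (\<gamma> n)))"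
    and lower_toeplitz_scaled_row_norm_le: "(\<Sum>n. norm (lower_toeplitz a j n * of_real (\<gamma> n))) \<le> (\<Sum>k. norm (a k)) * \<gamma> j"
proof -
  have "norm (lower_toeplitz a j n * of_real (\<gamma> n)) = lower_toeplitz (\<lambda>k. norm (a k)) j n * \<gamma> n" for n
    using assms(3)[of n] by (simp add: lower_toeplitz_def norm_mult)
  then have row: "(\<Sum>n. norm (lower_toeplitz a j n * of_real (\<gamma> n))) = (\<Sum>n\<le>j. norm (a (j - n)) * \<gamma> n)"
    by (simp add: suminf_lower_toeplitz_row_mult)
  show "norm (a 0) * \<gamma> j \<le> (\<Sum>n. norm (lower_toeplitz a j n * of_real (\<gamma> n)))"
    unfolding row using assms(3) by (intro convolution_ge_diagonal_term) (auto intro: less_imp_le)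
  show "(\<Sum>n. norm (lower_toeplitz a j n * of_real (\<gamma> n))) \<le> (\<Sum>k. norm (a k)) * \<gamma> j"
    unfolding row using assms(1,2) assms(3)[of j] by (intro convolution_le_suminf_mult_mono) auto
qed

lemma has_fps_expansion_of_sums_on_ball:
  fixes f :: "'a::{banach, real_normed_div_algebra} \<Rightarrow> 'a"
  assumes "r > 0" and "\<And>z. z \<in> ball 0 r \<Longrightarrow> (\<lambda>k. a k * z ^ k) sums f z"
  shows "f has_fps_expansion Abs_fps a"
proof (rule has_fps_expansionI)
  have "eventually (\<lambda>u. u \<in> ball 0 r) (nhds (0::'a))"
    using \<open>r > 0\<close> by (intro eventually_nhds_in_open) auto
  then show "eventually (\<lambda>u. (\<lambda>n. Abs_fps a $ n * u ^ n) sums f u) (nhds 0)"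
    by eventually_elim (use assms(2) in auto)
qed

lemma taylor_coeff0_eq_fps_nth:
  "g has_fps_expansion G \<Longrightarrow> taylor_coeff0 g m = G $ m"
  by (simp add: taylor_coeff0_def fps_nth_fps_expansion)

theorem theorem3p3:
  fixes f :: "complex \<Rightarrow> complex" and fhat :: "nat \<Rightarrow> complex"
    and \<gamma> :: "nat \<Rightarrow> real" and A :: "nat \<Rightarrow> nat \<Rightarrow> complex"
  assumes hol: "f holomorphic_on ball 0 1"
    and ser: "\<And>z. z \<in> ball 0 1 \<Longrightarrow> (\<lambda>k. fhat k * z ^ k) sums f z"
    and abs_sum: "summable (\<lambda>k. norm (fhat k))"
    and f0: "f 0 \<noteq> 0"
    and gpos: "\<And>n. \<gamma> n > 0"
    and gmono: "mono \<gamma>"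
    and A_def: "\<And>n k. A n k = (if k \<le> n then taylor_coeff0 (\<lambda>z. 1 / f z) (n - k) / complex_of_real (\<gamma> n) else 0)"
  shows "\<exists>B :: nat \<Rightarrow> nat \<Rightarrow> complex.
           (\<forall>j n. j < n \<longrightarrow> B j n = 0)
         \<and> (\<forall>j. summable (\<lambda>n. norm (B j n)))
         \<and> (\<forall>j k. (\<Sum>n. B j n * A n k) = (if j = k then 1 else 0))
         \<and> (\<exists>c1>0. \<exists>c2>0. \<forall>\<^sub>F j in sequentially.
               c1 * \<gamma> j \<le> (\<Sum>n. norm (B j n)) \<and> (\<Sum>n. norm (B j n)) \<le> c2 * \<gamma> j)"
proof -
  define F where "F = Abs_fps fhat"
  define S where "S = (\<Sum>k. norm (fhat k))"
  have F_nth: "fps_nth F = fhat"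
    by (simp add: F_def fun_eq_iff)
  have F_exp: "f has_fps_expansion F"
    unfolding F_def using ser by (intro has_fps_expansion_of_sums_on_ball) auto
  have fhat0: "fhat 0 \<noteq> 0"
    using fps_nth_fps_expansion[OF F_exp, of 0] f0 by (simp add: F_nth)
  have "(\<lambda>z. 1 / f z) has_fps_expansion inverse F"
    using has_fps_expansion_inverse[OF F_exp] fhat0 by (simp add: F_nth inverse_eq_divide)
  then have A_eq: "A n k = lower_toeplitz (fps_nth (inverse F)) n k / of_real (\<gamma> n)" for n k
    by (simp add: A_def lower_toeplitz_def taylor_coeff0_eq_fps_nth)
  define B where "B j n = lower_toeplitz fhat j n * of_real (\<gamma> n)" for j n
  have "(\<Sum>n. B j n * A n k) = (if j = k then 1 else 0)" for j k
    unfolding A_eq B_def F_nth[symmetric] using fhat0 gpos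
    by (intro lower_toeplitz_scaled_left_inverse) (auto simp: F_nth less_imp_neq[symmetric])
  moreover have "\<forall>\<^sub>F j in sequentially.
      norm (fhat 0) * \<gamma> j \<le> (\<Sum>n. norm (B j n)) \<and> (\<Sum>n. norm (B j n)) \<le> S * \<gamma> j"
    unfolding B_def S_def using abs_sum gmono gpos
    by (intro always_eventually allI conjI lower_toeplitz_scaled_row_norm_ge lower_toeplitz_scaled_row_norm_le)
  moreover have "0 < norm (fhat 0)" "0 < S"
    using fhat0 abs_sum sum_le_suminf[of "\<lambda>k. norm (fhat k)" "{0}"]
    by (simp_all add: S_def less_le_trans[of 0 "norm (fhat 0)"])
  moreover have "summable (\<lambda>n. norm (B j n))" for j
    by (rule summable_finite[of "{..j}"]) (auto simp: B_def lower_toeplitz_def)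
  moreover have "B j n = 0" if "j < n" for j n
    using that by (simp add: B_def lower_toeplitz_def)
  ultimately show ?thesis
    by blast
qed

end
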